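(* Let $g\in C(\mathcal{X},\mathbb{R}^{N_{2}})$. For any $\epsilon>0$ there exists a sampled network $\Phi$ with one hidden layer (of some finite width) and ReLU activation such that $\sup_{x\in\mathcal{X}}\|g(x)-\Phi(x)\|<\epsilon$. That is, the set of all such sampled networks is dense in $C(\mathcal{X},\mathbb{R}^{N_2})$ in the uniform norm.
   Context: Fix $D\ge1$, Euclidean norm and inner product on $\mathbb{R}^D$, $\phi(t)=\max\{t,0\}$. For $A\subseteq\mathbb{R}^D$ let $d(z,A)=\inf_{a\in A}\|z-a\|$, $\mathrm{Med}(A)=\{z:\exists p\neq q\in A,\ \|p-z\|=\|q-z\|=d(z,A)\}$, reach $\tau_A=\inf_{a\in A}d(a,\mathrm{Med}(A))$. Let $\mathcal{X}'\subset\mathbb{R}^D$ be nonempty compact with $\tau_{\mathcal{X}'}>0$, fix $0<\epsilon_I<\min\{\tau_{\mathcal{X}'},1\}$, and $\mathcal{X}=\{x:d(x,\mathcal{X}')\le\epsilon_I\}$. A sampled network with one hidden layer of $N_1$ neurons and ReLU activation is $\Phi(x)=\sum_{i=1}^{N_1}w_{2,i}\phi(\langle w_{1,i},x\rangle-b_{1,i})-b_2$ where for each $i$ there are distinct points $x^{(1)}_{0,i},x^{(2)}_{0,i}\in\mathcal{X}$ with $w_{1,i}=\frac{x^{(2)}_{0,i}-x^{(1)}_{0,i}}{\|x^{(2)}_{0,i}-x^{(1)}_{0,i}\|^2}$ and $b_{1,i}=\langle w_{1,i},x^{(1)}_{0,i}\rangle$; the output parameters $w_{2,i}\in\mathbb{R}^{N_2}$,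 $b_2\in\mathbb{R}^{N_2}$ are unrestricted. *)

theory Defs
  imports "HOL-Analysis.Analysis"
begin

definition relu :: "real \<Rightarrow> real" where
  "relu t = max t 0"

definition medial_axis :: "('a::real_normed_vector) set \<Rightarrow> 'a set" where
  "medial_axis A = {z. \<exists>p q. p \<in> A \<and> q \<in> A \<and> p \<noteq> q \<and>
      norm (p - z) = infdist z A \<and> norm (q - z) = infdist z A}"

text \<open>Reach, valued in the extended reals so that an empty medial axis gives reach infinity
  (infimum over the empty set).\<close>
definition reach :: "('a::real_normed_vector) set \<Rightarrow> ereal" where
  "reach A = (INF a\<in>A. (INF z\<in>medial_axis A. ereal (norm (a - z))))"

definition sampled_net ::
  "nat \<Rightarrow> (nat \<Rightarrow> real^'d) \<Rightarrow> (nat \<Rightarrow> real^'d) \<Rightarrow> (nat \<Rightarrow> real^'m) \<Rightarrow> real^'m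
     \<Rightarrow> real^'d \<Rightarrow> real^'m" where
  "sampled_net N1 x1 x2 w2 b2 = (\<lambda>x.
     (\<Sum>i<N1. let w1 = (x2 i - x1 i) /\<^sub>R (norm (x2 i - x1 i))\<^sup>2;
                  b1 = inner w1 (x1 i)
              in relu (inner w1 x - b1) *\<^sub>R w2 i) - b2)"

definition is_sampled_network :: "(real^'d) set \<Rightarrow> (real^'d \<Rightarrow> real^'m) \<Rightarrow> bool" where
  "is_sampled_network X \<Phi> \<longleftrightarrow> (\<exists>N1 x1 x2 w2 b2.
      (\<forall>i<N1. x1 i \<in> X \<and> x2 i \<in> X \<and> x1 i \<noteq> x2 i) \<and>
      \<Phi> = sampled_net N1 x1 x2 w2 b2)"

end

theory Submission
  imports Defs
begin

text \<open>The sampled neuron on \<open>(p, q)\<close> is the ramp \<open>relu <q - p, x - p>\<close> divided by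
  \<open>||q - p||^2\<close>, so it suffices to approximate every component of \<open>g\<close> uniformly by linear
  combinations of such ramps. By Stone-Weierstrass the sums of terms \<open>c exp <w, x>\<close> are dense
  in \<open>C(X)\<close>, and each term is a ridge function \<open>h <w, x>\<close>. On the interval spanned by
  \<open><w, X>\<close>, \<open>h\<close> is uniformly close to its piecewise linear interpolants, which are
  combinations of one-dimensional ramps \<open>relu (t - c)\<close>. If the level \<open>c\<close> is attained on
  \<open>X\<close>, a ball inside \<open>X\<close> contains a segment in direction \<open>w\<close> starting at level \<open>c\<close>,
  which yields \<open>relu (<w, x> - c)\<close> from one ramp (plus a linear function, itself a difference
  of two opposite ramps, when the segment points backwards). A knot \<open>c\<close> in a gap of
  \<open><w, X>\<close> is replaced, on \<open>X\<close>, by a convex combination of the ramps at the ends of the gap.\<close>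

lemma sum_lessThan_add:
  fixes f :: "nat \<Rightarrow> 'a::comm_monoid_add"
  shows "(\<Sum>i<m + n. f i) = (\<Sum>i<m. f i) + (\<Sum>i<n. f (m + i))"
  by (induction n) (simp_all add: add.assoc)

lemma relu_divide_pos: "0 < c \<Longrightarrow> relu (s / c) = relu s / c"
  by (auto simp: relu_def max_def divide_le_0_iff)

lemma relu_minus_relu_neg: "relu s - relu (- s) = s"
  by (auto simp: relu_def max_def)

lemma relu_rescale:
  assumes "t \<noteq> 0"
  shows "relu s = relu (t * s) / \<bar>t\<bar> + (if t < 0 then s else 0)"
  using assms by (auto simp: relu_def max_def mult_le_0_iff field_simps)

lemma relu_gap_combination:
  fixes c1 c c2 t :: real
  assumes "c1 < c" "c < c2" "t \<le> c1 \<or> c2 \<le> t"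
  shows "relu (t - c) = (c2 - c) / (c2 - c1) * relu (t - c1) + (c - c1) / (c2 - c1) * relu (t - c2)"
  using assms(3)
proof
  assume "t \<le> c1"
  then show ?thesis using assms(1,2) by (simp add: relu_def)
next
  assume "c2 \<le> t"
  then have ramps: "relu (t - c) = t - c" "relu (t - c1) = t - c1" "relu (t - c2) = t - c2"
    using assms(1,2) by (simp_all add: relu_def)
  have "c2 - c1 \<noteq> 0" using assms(1,2) by simp
  then show ?thesis unfolding ramps by (simp add: divide_simps) (simp add: algebra_simps)
qed

section \<open>Sampled networks\<close>

lemma is_sampled_network_const: "is_sampled_network X (\<lambda>_. c)"
  unfolding is_sampled_network_def
  by (rule exI[of _ 0], rule exI, rule exI, rule exI, rule exI[of _ "- c"]) (simp add: sampled_net_def)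

lemma is_sampled_network_add:
  assumes "is_sampled_network X f" "is_sampled_network X g"
  shows "is_sampled_network X (\<lambda>x. f x + g x)"
proof -
  obtain N x1 x2 w2 b2 where f: "\<forall>i<N. x1 i \<in> X \<and> x2 i \<in> X \<and> x1 i \<noteq> x2 i"
    "f = sampled_net N x1 x2 w2 b2"
    using assms(1) unfolding is_sampled_network_def by blast
  obtain M y1 y2 v2 c2 where g: "\<forall>i<M. y1 i \<in> X \<and> y2 i \<in> X \<and> y1 i \<noteq> y2 i"
    "g = sampled_net M y1 y2 v2 c2"
    using assms(2) unfolding is_sampled_network_def by blast
  define z1 where "z1 i = (if i < N then x1 i else y1 (i - N))" for i
  define z2 where "z2 i = (if i < N then x2 i else y2 (i - N))" for i
  define u2 where "u2 i = (if i < N then w2 i else v2 (i - N))" for i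
  have "(\<lambda>x. f x + g x) = sampled_net (N + M) z1 z2 u2 (b2 + c2)"
    unfolding f(2) g(2) sampled_net_def sum_lessThan_add
    by (simp add: z1_def z2_def u2_def algebra_simps)
  moreover have "\<forall>i<N + M. z1 i \<in> X \<and> z2 i \<in> X \<and> z1 i \<noteq> z2 i"
    using f(1) g(1) by (auto simp: z1_def z2_def)
  ultimately show ?thesis unfolding is_sampled_network_def by blast
qed

lemma is_sampled_network_sum:
  assumes "finite I" "\<And>j. j \<in> I \<Longrightarrow> is_sampled_network X (F j)"
  shows "is_sampled_network X (\<lambda>x. \<Sum>j\<in>I. F j x)"
  using assms
  by (induction I rule: finite_induct) (simp_all add: is_sampled_network_const is_sampled_network_add)

lemma is_sampled_network_ramp:
  assumes "p \<in> X" "q \<in> X" "p \<noteq> q"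
  shows "is_sampled_network X (\<lambda>x. relu (inner (q - p) (x - p)) *\<^sub>R v)"
proof -
  have n: "0 < (norm (q - p))\<^sup>2" using assms(3) by simp
  have "inner ((q - p) /\<^sub>R (norm (q - p))\<^sup>2) x - inner ((q - p) /\<^sub>R (norm (q - p))\<^sup>2) p
      = inner (q - p) (x - p) / (norm (q - p))\<^sup>2" for x
    by (simp add: inner_diff_right divide_simps)
  then have "relu (inner ((q - p) /\<^sub>R (norm (q - p))\<^sup>2) x - inner ((q - p) /\<^sub>R (norm (q - p))\<^sup>2) p)
      = relu (inner (q - p) (x - p)) / (norm (q - p))\<^sup>2" for x
    by (simp add: relu_divide_pos[OF n])
  then have "(\<lambda>x. relu (inner (q - p) (x - p)) *\<^sub>R v)
      = sampled_net 1 (\<lambda>_. p) (\<lambda>_. q) (\<lambda>_. (norm (q - p))\<^sup>2 *\<^sub>R v) 0"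
    using n by (simp add: sampled_net_def)
  with assms show ?thesis
    unfolding is_sampled_network_def by (intro exI[of _ 1]) fastforce
qed

section \<open>Combinations of ramps on a union of balls\<close>

inductive_set ramp_span :: "'a::real_inner set \<Rightarrow> ('a \<Rightarrow> real) set" for X where
  const: "(\<lambda>_. c) \<in> ramp_span X"
| ramp: "p \<in> X \<Longrightarrow> q \<in> X \<Longrightarrow> p \<noteq> q \<Longrightarrow> (\<lambda>x. relu (inner (q - p) (x - p))) \<in> ramp_span X"
| scale: "f \<in> ramp_span X \<Longrightarrow> (\<lambda>x. r * f x) \<in> ramp_span X"
| add: "f \<in> ramp_span X \<Longrightarrow> g \<in> ramp_span X \<Longrightarrow> (\<lambda>x. f x + g x) \<in> ramp_span X"

lemma ramp_span_diff:
  "f \<in> ramp_span X \<Longrightarrow> g \<in> ramp_span X \<Longrightarrow> (\<lambda>x. f x - g x) \<in> ramp_span X"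
  using ramp_span.add[of f X "\<lambda>x. (- 1) * g x"] ramp_span.scale[of g X "- 1"] by simp

lemma is_sampled_network_ramp_span:
  "f \<in> ramp_span X \<Longrightarrow> is_sampled_network X (\<lambda>x. f x *\<^sub>R v)"
proof (induction arbitrary: v rule: ramp_span.induct)
  case (const c)
  show ?case by (rule is_sampled_network_const)
next
  case (ramp p q)
  then show ?case by (rule is_sampled_network_ramp)
next
  case (scale f r)
  then show ?case using scale.IH[of "r *\<^sub>R v"] by (simp add: mult.commute)
next
  case (add f g)
  then show ?case using is_sampled_network_add[OF add.IH] by (simp add: scaleR_left_distrib)
qed

definition union_of_cballs :: "'a::metric_space set \<Rightarrow> bool" where
  "union_of_cballs X \<longleftrightarrow> (\<forall>q\<in>X. \<exists>p r. 0 < r \<and> q \<in> cball p r \<and> cball p r \<subseteq> X)"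

lemma union_of_cballs_infdist_le:
  fixes A :: "'a::heine_borel set"
  assumes "closed A" "A \<noteq> {}" "0 < r"
  shows "union_of_cballs {x. infdist x A \<le> r}"
  unfolding union_of_cballs_def
proof
  fix q assume "q \<in> {x. infdist x A \<le> r}"
  moreover obtain p where "p \<in> A" "infdist q A = dist q p"
    using infdist_attains_inf[OF assms(1,2)] by metis
  moreover have "cball p r \<subseteq> {x. infdist x A \<le> r}"
  proof
    fix y assume "y \<in> cball p r"
    then show "y \<in> {x. infdist x A \<le> r}"
      using infdist_le[OF \<open>p \<in> A\<close>, of y] by (simp add: dist_commute)
  qed
  ultimately show "\<exists>p r'. 0 < r' \<and> q \<in> cball p r' \<and> cball p r' \<subseteq> {x. infdist x A \<le> r}"
    using assms(3) by (auto simp: dist_commute)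
qed

lemma ramp_span_inner:
  fixes X :: "'a::real_inner set"
  assumes "union_of_cballs X" "X \<noteq> {}"
  shows "(\<lambda>x. inner w x) \<in> ramp_span X"
proof (cases "w = 0")
  case True
  then show ?thesis using ramp_span.const[of 0 X] by simp
next
  case False
  obtain p r where "0 < r" "cball p r \<subseteq> X"
    using assms unfolding union_of_cballs_def by blast
  define v where "v = (r / norm w) *\<^sub>R w"
  have "norm v = r" "v \<noteq> 0"
    using \<open>0 < r\<close> False by (simp_all add: v_def)
  then have "p \<in> X" "p + v \<in> X" "p - v \<in> X"
    using \<open>cball p r \<subseteq> X\<close> \<open>0 < r\<close> by (auto simp: dist_norm)
  then have "(\<lambda>x. norm w / r * (relu (inner (p + v - p) (x - p)) - relu (inner (p - v - p) (x - p)))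
      + inner w p) \<in> ramp_span X"
    using \<open>v \<noteq> 0\<close>
    by (intro ramp_span.add ramp_span.scale ramp_span_diff ramp_span.ramp ramp_span.const) auto
  moreover have "norm w / r * (relu (inner (p + v - p) (x - p)) - relu (inner (p - v - p) (x - p)))
      + inner w p = inner w x" for x
  proof -
    define s where "s = r / norm w * (inner w x - inner w p)"
    have "inner (p + v - p) (x - p) = s" "inner (p - v - p) (x - p) = - s"
      by (simp_all add: s_def v_def algebra_simps)
    then show ?thesis
      using relu_minus_relu_neg[of s] \<open>0 < r\<close> False by (simp add: s_def)
  qed
  ultimately show ?thesis by simp
qed

lemma ramp_span_level_of_segment:
  fixes X :: "'a::real_inner set"
  assumes "union_of_cballs X" "y \<in> X" "y + t *\<^sub>R w \<in> X" "t \<noteq> 0" "w \<noteq> 0"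
  shows "(\<lambda>x. relu (inner w x - inner w y)) \<in> ramp_span X"
proof -
  let ?s = "\<lambda>x. inner w x - inner w y"
  have "(\<lambda>x. relu (inner (y + t *\<^sub>R w - y) (x - y))) \<in> ramp_span X"
    using assms by (intro ramp_span.ramp) auto
  then have "(\<lambda>x. relu (t * ?s x)) \<in> ramp_span X"
    by (simp add: inner_diff_right right_diff_distrib)
  moreover have "(\<lambda>x. if t < 0 then ?s x else 0) \<in> ramp_span X"
  proof (cases "t < 0")
    case True
    have "X \<noteq> {}" using assms(2) by blast
    then show ?thesis
      using True ramp_span_diff[OF ramp_span_inner[OF assms(1)] ramp_span.const] by simp
  next
    case False
    then show ?thesis using ramp_span.const[of 0 X] by simp
  qed
  ultimately have "(\<lambda>x. 1 / \<bar>t\<bar> * relu (t * ?s x) + (if t < 0 then ?s x else 0)) \<in> ramp_span X"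
    by (rule ramp_span.add[OF ramp_span.scale])
  moreover have "1 / \<bar>t\<bar> * relu (t * ?s x) + (if t < 0 then ?s x else 0) = relu (?s x)" for x
    using relu_rescale[OF assms(4), of "?s x"] by simp
  ultimately show ?thesis by simp
qed

text \<open>The witness: project \<open>q\<close> onto the diameter of the ball in direction \<open>w\<close>, which keeps
  the level of \<open>\<langle>w, \<cdot>\<rangle>\<close>, and move on to the farther endpoint of that diameter.\<close>

lemma cball_level_segment:
  fixes p q w :: "'a::real_inner"
  assumes "q \<in> cball p r" "0 < r" "w \<noteq> 0"
  obtains y t where "y \<in> cball p r" "y + t *\<^sub>R w \<in> cball p r" "t \<noteq> 0" "inner w y = inner w q"
proof -
  define \<alpha> where "\<alpha> = inner w (q - p) / (norm w)\<^sup>2"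
  define \<rho> where "\<rho> = r / norm w"
  have \<rho>: "0 < \<rho>" using assms(2,3) by (simp add: \<rho>_def)
  have diameter: "p + \<beta> *\<^sub>R w \<in> cball p r" if "\<bar>\<beta>\<bar> \<le> \<rho>" for \<beta>
  proof -
    have "\<bar>\<beta>\<bar> * norm w \<le> r"
      using that assms(3) by (simp add: \<rho>_def pos_le_divide_eq)
    then show ?thesis by (simp add: dist_norm)
  qed
  have "\<bar>inner w (q - p)\<bar> \<le> norm w * r"
    using Cauchy_Schwarz_ineq2[of w "q - p"] assms(1) mult_left_mono[of "norm (q - p)" r "norm w"]
    by (simp add: dist_norm norm_minus_commute)
  then have "\<bar>inner w (q - p)\<bar> / (norm w)\<^sup>2 \<le> norm w * r / (norm w)\<^sup>2"
    by (rule divide_right_mono) simp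
  then have "\<bar>\<alpha>\<bar> \<le> norm w * r / (norm w)\<^sup>2"
    by (simp add: \<alpha>_def abs_div)
  also have "\<dots> = \<rho>"
    by (simp add: \<rho>_def power2_eq_square)
  finally have "\<bar>\<alpha>\<bar> \<le> \<rho>" .
  define \<sigma> where "\<sigma> = (if \<alpha> < 0 then \<rho> else - \<rho>)"
  show ?thesis
  proof
    show "p + \<alpha> *\<^sub>R w \<in> cball p r" using diameter \<open>\<bar>\<alpha>\<bar> \<le> \<rho>\<close> .
    have "p + \<alpha> *\<^sub>R w + (\<sigma> - \<alpha>) *\<^sub>R w = p + \<sigma> *\<^sub>R w"
      by (simp add: algebra_simps)
    moreover have "\<bar>\<sigma>\<bar> \<le> \<rho>" using \<rho> by (simp add: \<sigma>_def)
    ultimately show "p + \<alpha> *\<^sub>R w + (\<sigma> - \<alpha>) *\<^sub>R w \<in> cball p r"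
      using diameter[of \<sigma>] by metis
    show "\<sigma> - \<alpha> \<noteq> 0" using \<rho> by (auto simp: \<sigma>_def)
    show "inner w (p + \<alpha> *\<^sub>R w) = inner w q"
      using assms(3) by (simp add: \<alpha>_def inner_add_right inner_diff_right power2_norm_eq_inner)
  qed
qed

lemma ramp_span_level:
  fixes X :: "'a::real_inner set"
  assumes "union_of_cballs X" "q \<in> X"
  shows "(\<lambda>x. relu (inner w x - inner w q)) \<in> ramp_span X"
proof (cases "w = 0")
  case True
  then show ?thesis using ramp_span.const[of 0 X] by (simp add: relu_def)
next
  case False
  obtain p r where "0 < r" "q \<in> cball p r" "cball p r \<subseteq> X"
    using assms unfolding union_of_cballs_def by blast
  obtain y t where "y \<in> cball p r" "y + t *\<^sub>R w \<in> cball p r" "t \<noteq> 0"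
    and level: "inner w y = inner w q"
    by (rule cball_level_segment[OF \<open>q \<in> cball p r\<close> \<open>0 < r\<close> False])
  with \<open>cball p r \<subseteq> X\<close> have "(\<lambda>x. relu (inner w x - inner w y)) \<in> ramp_span X"
    by (intro ramp_span_level_of_segment[OF assms(1) _ _ _ False]) auto
  with level show ?thesis by simp
qed

lemma compact_real_gap:
  fixes P :: "real set"
  assumes "compact P" "a \<in> P" "b \<in> P" "c \<in> {a..b}" "c \<notin> P"
  obtains c1 c2 where "c1 \<in> P" "c2 \<in> P" "c1 < c" "c < c2" "\<forall>t\<in>P. t \<le> c1 \<or> c2 \<le> t"
proof -
  have compact: "compact (P \<inter> {..c})" "compact (P \<inter> {c..})"
    using assms(1) by (simp_all add: compact_Int_closed)
  have nonempty: "P \<inter> {..c} \<noteq> {}" "P \<inter> {c..} \<noteq> {}"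
    using assms(2-4) by auto
  obtain c1 where c1: "c1 \<in> P \<inter> {..c}" "\<forall>t\<in>P \<inter> {..c}. t \<le> c1"
    using compact_attains_sup[OF compact(1) nonempty(1)] by blast
  obtain c2 where c2: "c2 \<in> P \<inter> {c..}" "\<forall>t\<in>P \<inter> {c..}. c2 \<le> t"
    using compact_attains_inf[OF compact(2) nonempty(2)] by blast
  show ?thesis
  proof
    show "c1 < c" "c < c2" using c1(1) c2(1) assms(5) by (auto simp: order_le_less)
    show "\<forall>t\<in>P. t \<le> c1 \<or> c2 \<le> t" using c1(2) c2(2) by force
  qed (use c1 c2 in auto)
qed

lemma ramp_span_knot:
  fixes X :: "'a::real_inner set"
  assumes "union_of_cballs X" "compact X" "a \<in> inner w ` X" "b \<in> inner w ` X" "c \<in> {a..b}"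
  shows "\<exists>f\<in>ramp_span X. \<forall>x\<in>X. f x = relu (inner w x - c)"
proof (cases "c \<in> inner w ` X")
  case True
  then obtain q where "q \<in> X" "c = inner w q" by blast
  then show ?thesis
    using ramp_span_level[OF assms(1) \<open>q \<in> X\<close>] by (intro bexI[of _ "\<lambda>x. relu (inner w x - c)"]) simp_all
next
  case False
  have "compact (inner w ` X)"
    using assms(2) by (intro compact_continuous_image continuous_intros)
  then obtain c1 c2 where "c1 \<in> inner w ` X" "c2 \<in> inner w ` X" "c1 < c" "c < c2"
    and gap: "\<forall>t\<in>inner w ` X. t \<le> c1 \<or> c2 \<le> t"
    by (rule compact_real_gap[OF _ assms(3-5) False])
  then obtain q1 q2 where q: "q1 \<in> X" "c1 = inner w q1" "q2 \<in> X" "c2 = inner w q2" by blast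
  define f where "f x = (c2 - c) / (c2 - c1) * relu (inner w x - inner w q1)
    + (c - c1) / (c2 - c1) * relu (inner w x - inner w q2)" for x
  have "f \<in> ramp_span X"
    unfolding f_def
    by (rule ramp_span.add[OF ramp_span.scale ramp_span.scale])
      (rule ramp_span_level[OF assms(1) q(1)], rule ramp_span_level[OF assms(1) q(3)])
  moreover have "f x = relu (inner w x - c)" if "x \<in> X" for x
  proof -
    have "inner w x \<le> c1 \<or> c2 \<le> inner w x" using gap that by blast
    from relu_gap_combination[OF \<open>c1 < c\<close> \<open>c < c2\<close> this] show ?thesis
      by (simp add: f_def q(2,4))
  qed
  ultimately show ?thesis by blast
qed

section \<open>Piecewise linear functions of one variable\<close>

inductive_set knot_span :: "real \<Rightarrow> real \<Rightarrow> (real \<Rightarrow> real) set" for a b where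
  const: "(\<lambda>_. c) \<in> knot_span a b"
| ramp: "c \<in> {a..b} \<Longrightarrow> (\<lambda>t. relu (t - c)) \<in> knot_span a b"
| scale: "F \<in> knot_span a b \<Longrightarrow> (\<lambda>t. r * F t) \<in> knot_span a b"
| add: "F \<in> knot_span a b \<Longrightarrow> G \<in> knot_span a b \<Longrightarrow> (\<lambda>t. F t + G t) \<in> knot_span a b"

lemma ramp_span_ridge_of_knot_span:
  fixes X :: "'a::real_inner set"
  assumes "union_of_cballs X" "compact X" "a \<in> inner w ` X" "b \<in> inner w ` X"
    and "F \<in> knot_span a b"
  shows "\<exists>f\<in>ramp_span X. \<forall>x\<in>X. f x = F (inner w x)"
  using assms(5)
proof induction
  case (const c)
  show ?case by (intro bexI[of _ "\<lambda>_. c"] ramp_span.const) simp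
next
  case (ramp c)
  then show ?case using ramp_span_knot[OF assms(1-4)] by blast
next
  case (scale F r)
  then obtain f where "f \<in> ramp_span X" "\<forall>x\<in>X. f x = F (inner w x)" by blast
  then show ?case by (intro bexI[of _ "\<lambda>x. r * f x"] ramp_span.scale) auto
next
  case (add F G)
  then obtain f g where "f \<in> ramp_span X" "\<forall>x\<in>X. f x = F (inner w x)"
    and "g \<in> ramp_span X" "\<forall>x\<in>X. g x = G (inner w x)" by blast
  then show ?case by (intro bexI[of _ "\<lambda>x. f x + g x"] ramp_span.add) auto
qed

text \<open>The interpolant is built knot by knot; beyond the last knot \<open>s n\<close> it continues with
  the slope of the next cell, so that adding the ramp at \<open>s (Suc n)\<close> only bends it there.\<close>

lemma knot_span_interpolant:
  fixes s y :: "nat \<Rightarrow> real"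
  assumes "strict_mono s" and knots: "\<And>j. j \<le> n \<Longrightarrow> s j \<in> {a..b}"
  defines "slope j \<equiv> (y (Suc j) - y j) / (s (Suc j) - s j)"
  shows "\<exists>F\<in>knot_span a b. (\<forall>j<n. \<forall>t\<in>{s j..s (Suc j)}. F t = y j + (t - s j) * slope j)
    \<and> (\<forall>t\<ge>s n. F t = y n + (t - s n) * slope n)"
  using knots
proof (induction n)
  case 0
  have "(\<lambda>t. y 0 + slope 0 * relu (t - s 0)) \<in> knot_span a b"
    using "0.prems" by (intro knot_span.add knot_span.const knot_span.scale knot_span.ramp) simp
  then show ?case by (intro bexI[of _ "\<lambda>t. y 0 + slope 0 * relu (t - s 0)"]) (auto simp: relu_def)
next
  case (Suc n)
  then obtain F where F: "F \<in> knot_span a b"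
    "\<forall>j<n. \<forall>t\<in>{s j..s (Suc j)}. F t = y j + (t - s j) * slope j"
    "\<forall>t\<ge>s n. F t = y n + (t - s n) * slope n"
    by force
  define F' where "F' t = F t + (slope (Suc n) - slope n) * relu (t - s (Suc n))" for t
  have "F' \<in> knot_span a b"
    unfolding F'_def using Suc.prems
    by (intro knot_span.add knot_span.scale knot_span.ramp F(1)) simp
  moreover have "F' t = y j + (t - s j) * slope j"
    if "j < Suc n" "t \<in> {s j..s (Suc j)}" for j t
  proof -
    have "t \<le> s (Suc n)"
      using that \<open>strict_mono s\<close> by (auto simp: strict_mono_less_eq intro: order_trans)
    then have "F' t = F t" by (simp add: F'_def relu_def)
    moreover have "F t = y j + (t - s j) * slope j"
      using F(2,3) that by (auto simp: less_Suc_eq)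
    ultimately show ?thesis by simp
  qed
  moreover have "F' t = y (Suc n) + (t - s (Suc n)) * slope (Suc n)" if "s (Suc n) \<le> t" for t
  proof -
    have step: "s n < s (Suc n)" using \<open>strict_mono s\<close> by (simp add: strict_mono_def)
    then have "F t = y n + (t - s n) * slope n" using F(3) that by simp
    moreover have "y (Suc n) = y n + (s (Suc n) - s n) * slope n"
      using step by (simp add: slope_def)
    ultimately show ?thesis
      using that by (simp add: F'_def relu_def algebra_simps)
  qed
  ultimately show ?case by blast
qed

lemma partition_cell:
  fixes s :: "nat \<Rightarrow> real"
  assumes "s 0 \<le> t" "t \<le> s (Suc n)"
  shows "\<exists>j\<le>n. s j \<le> t \<and> t \<le> s (Suc j)"
  using assms(2)
proof (induction n)
  case 0
  then show ?case using assms(1) by auto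
next
  case (Suc n)
  then show ?case by (cases "t \<le> s (Suc n)") (auto intro: le_SucI)
qed

lemma linear_interpolation_error:
  fixes u v t y0 y1 z :: real
  assumes "u \<le> t" "t \<le> v" "u < v" "\<bar>z - y0\<bar> < e" "\<bar>z - y1\<bar> < e"
  shows "\<bar>z - (y0 + (t - u) * ((y1 - y0) / (v - u)))\<bar> < e"
proof -
  define l where "l = (t - u) / (v - u)"
  have "0 \<le> l" "l \<le> 1" using assms(1-3) by (simp_all add: l_def divide_simps)
  have "y0 + (t - u) * ((y1 - y0) / (v - u)) = y0 + l * (y1 - y0)"
    by (simp add: l_def)
  also have "\<dots> = (1 - l) *\<^sub>R y0 + l *\<^sub>R y1"
    by (simp add: algebra_simps)
  finally have "y0 + (t - u) * ((y1 - y0) / (v - u)) \<in> closed_segment y0 y1"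
    using \<open>0 \<le> l\<close> \<open>l \<le> 1\<close> unfolding closed_segment_def by blast
  moreover have "y0 \<in> ball z e" "y1 \<in> ball z e"
    using assms(4,5) by (simp_all add: dist_real_def)
  then have "closed_segment y0 y1 \<subseteq> ball z e"
    using convex_ball convex_contains_segment by blast
  ultimately have "y0 + (t - u) * ((y1 - y0) / (v - u)) \<in> ball z e" by blast
  then show ?thesis by (simp add: dist_real_def)
qed

lemma uniform_partition:
  fixes a b \<delta> :: real
  assumes "a < b" "0 < \<delta>"
  obtains s n where "strict_mono s" "s 0 = a" "s (Suc n) = b" "\<And>j. s (Suc j) - s j < \<delta>"
proof -
  obtain n :: nat where "(b - a) / \<delta> < n"
    using reals_Archimedean2[of "(b - a) / \<delta>"] by blast
  then have "b - a < Suc n * \<delta>"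
    using assms(2) by (simp add: divide_less_eq algebra_simps)
  define mesh where "mesh = (b - a) / Suc n"
  have "0 < mesh" "mesh < \<delta>"
    using assms(1) \<open>b - a < Suc n * \<delta>\<close> by (simp_all add: mesh_def divide_less_eq mult.commute)
  show ?thesis
  proof
    show "strict_mono (\<lambda>j :: nat. a + j * mesh)"
      using \<open>0 < mesh\<close> by (simp add: strict_mono_Suc_iff algebra_simps)
    show "a + Suc n * mesh = b" by (simp add: mesh_def)
    show "a + Suc j * mesh - (a + j * mesh) < \<delta>" for j
      using \<open>mesh < \<delta>\<close> by (simp add: algebra_simps)
  qed simp
qed

section \<open>Uniform approximation\<close>

definition uniform_closure_on :: "'a set \<Rightarrow> ('a \<Rightarrow> real) set \<Rightarrow> ('a \<Rightarrow> real) set" where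
  "uniform_closure_on X S = {f. \<forall>e>0. \<exists>s\<in>S. \<forall>x\<in>X. \<bar>f x - s x\<bar> < e}"

lemma uniform_closure_onD:
  "f \<in> uniform_closure_on X S \<Longrightarrow> 0 < e \<Longrightarrow> \<exists>s\<in>S. \<forall>x\<in>X. \<bar>f x - s x\<bar> < e"
  by (simp add: uniform_closure_on_def)

lemma uniform_closure_on_add:
  assumes "\<And>f g. f \<in> S \<Longrightarrow> g \<in> S \<Longrightarrow> (\<lambda>x. f x + g x) \<in> S"
    and "f \<in> uniform_closure_on X S" "g \<in> uniform_closure_on X S"
  shows "(\<lambda>x. f x + g x) \<in> uniform_closure_on X S"
  unfolding uniform_closure_on_def
proof (intro CollectI allI impI)
  fix e :: real assume "0 < e"
  then have "0 < e / 2" by simp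
  obtain f' where f': "f' \<in> S" "\<forall>x\<in>X. \<bar>f x - f' x\<bar> < e / 2"
    using uniform_closure_onD[OF assms(2) \<open>0 < e / 2\<close>] by blast
  obtain g' where g': "g' \<in> S" "\<forall>x\<in>X. \<bar>g x - g' x\<bar> < e / 2"
    using uniform_closure_onD[OF assms(3) \<open>0 < e / 2\<close>] by blast
  show "\<exists>s\<in>S. \<forall>x\<in>X. \<bar>f x + g x - s x\<bar> < e"
  proof (intro bexI[of _ "\<lambda>x. f' x + g' x"] ballI)
    fix x assume "x \<in> X"
    then have "\<bar>f x - f' x\<bar> < e / 2" "\<bar>g x - g' x\<bar> < e / 2" using f' g' by auto
    then show "\<bar>f x + g x - (f' x + g' x)\<bar> < e" by arith
  qed (rule assms(1)[OF f'(1) g'(1)])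
qed

lemma uniform_closure_on_trans:
  assumes "T \<subseteq> uniform_closure_on X S" "f \<in> uniform_closure_on X T"
  shows "f \<in> uniform_closure_on X S"
  unfolding uniform_closure_on_def
proof (intro CollectI allI impI)
  fix e :: real assume "0 < e"
  then have "0 < e / 2" by simp
  obtain t where t: "t \<in> T" "\<forall>x\<in>X. \<bar>f x - t x\<bar> < e / 2"
    using uniform_closure_onD[OF assms(2) \<open>0 < e / 2\<close>] by blast
  obtain s where s: "s \<in> S" "\<forall>x\<in>X. \<bar>t x - s x\<bar> < e / 2"
    using uniform_closure_onD[OF subsetD[OF assms(1) t(1)] \<open>0 < e / 2\<close>] by blast
  show "\<exists>s\<in>S. \<forall>x\<in>X. \<bar>f x - s x\<bar> < e"
  proof (intro bexI[of _ s] ballI)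
    fix x assume "x \<in> X"
    then have "\<bar>f x - t x\<bar> < e / 2" "\<bar>t x - s x\<bar> < e / 2" using t s by auto
    then show "\<bar>f x - s x\<bar> < e" by arith
  qed (rule s(1))
qed

lemma continuous_in_uniform_closure_knot_span:
  assumes "a \<le> b" "continuous_on {a..b} h"
  shows "h \<in> uniform_closure_on {a..b} (knot_span a b)"
  unfolding uniform_closure_on_def
proof (intro CollectI allI impI)
  fix e :: real assume "0 < e"
  show "\<exists>F\<in>knot_span a b. \<forall>t\<in>{a..b}. \<bar>h t - F t\<bar> < e"
  proof (cases "a = b")
    case True
    then show ?thesis using \<open>0 < e\<close> by (intro bexI[of _ "\<lambda>_. h a"] knot_span.const) auto
  next
    case False
    have "uniformly_continuous_on {a..b} h"
      using assms(2) by (intro compact_uniformly_continuous) auto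
    then obtain \<delta> where "0 < \<delta>"
      and \<delta>: "\<And>t t'. t \<in> {a..b} \<Longrightarrow> t' \<in> {a..b} \<Longrightarrow> dist t' t < \<delta> \<Longrightarrow> dist (h t') (h t) < e"
      by (rule uniformly_continuous_onE[OF _ \<open>0 < e\<close>]) blast
    have "a < b" using False assms(1) by simp
    then obtain s n where "strict_mono s" "s 0 = a" "s (Suc n) = b"
      and mesh: "\<And>j. s (Suc j) - s j < \<delta>"
      by (rule uniform_partition[OF _ \<open>0 < \<delta>\<close>]) blast
    then have knots: "s j \<in> {a..b}" if "j \<le> Suc n" for j
      using that by (auto simp: strict_mono_less_eq)
    obtain F where "F \<in> knot_span a b" and F: "\<forall>j<Suc n. \<forall>t\<in>{s j..s (Suc j)}.
        F t = h (s j) + (t - s j) * ((h (s (Suc j)) - h (s j)) / (s (Suc j) - s j))"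
      using knot_span_interpolant[OF \<open>strict_mono s\<close> knots, where y = "\<lambda>j. h (s j)"] by blast
    have "\<bar>h t - F t\<bar> < e" if "t \<in> {a..b}" for t
    proof -
      have "s 0 \<le> t" "t \<le> s (Suc n)"
        using that \<open>s 0 = a\<close> \<open>s (Suc n) = b\<close> by auto
      then obtain j where "j \<le> n" "s j \<le> t" "t \<le> s (Suc j)"
        using partition_cell by blast
      then have "\<bar>h t - h (s j)\<bar> < e" "\<bar>h t - h (s (Suc j))\<bar> < e"
        using \<delta>[OF that knots[of j]] \<delta>[OF that knots[of "Suc j"]] mesh[of j]
        by (simp_all add: dist_real_def)
      moreover have "s j < s (Suc j)"
        using \<open>strict_mono s\<close> by (simp add: strict_mono_def)
      moreover have "F t = h (s j) + (t - s j) * ((h (s (Suc j)) - h (s j)) / (s (Suc j) - s j))"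
        using F \<open>j \<le> n\<close> \<open>s j \<le> t\<close> \<open>t \<le> s (Suc j)\<close> by simp
      ultimately show ?thesis
        using linear_interpolation_error[OF \<open>s j \<le> t\<close> \<open>t \<le> s (Suc j)\<close>] by simp
    qed
    with \<open>F \<in> knot_span a b\<close> show ?thesis by blast
  qed
qed

lemma ridge_in_uniform_closure_ramp_span:
  fixes X :: "'a::real_inner set"
  assumes "union_of_cballs X" "compact X" "X \<noteq> {}" "continuous_on UNIV h"
  shows "(\<lambda>x. h (inner w x)) \<in> uniform_closure_on X (ramp_span X)"
  unfolding uniform_closure_on_def
proof (intro CollectI allI impI)
  fix e :: real assume "0 < e"
  have "continuous_on X (inner w)" by (intro continuous_intros)
  then obtain ya yb where "ya \<in> X" "yb \<in> X"
    and range: "\<And>x. x \<in> X \<Longrightarrow> inner w x \<in> {inner w ya..inner w yb}"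
    using continuous_attains_inf[OF assms(2,3)] continuous_attains_sup[OF assms(2,3)]
    by (metis atLeastAtMost_iff)
  then have "h \<in> uniform_closure_on {inner w ya..inner w yb} (knot_span (inner w ya) (inner w yb))"
    by (intro continuous_in_uniform_closure_knot_span continuous_on_subset[OF assms(4)]) auto
  then obtain F where "F \<in> knot_span (inner w ya) (inner w yb)"
    and F: "\<forall>t\<in>{inner w ya..inner w yb}. \<bar>h t - F t\<bar> < e"
    using uniform_closure_onD \<open>0 < e\<close> by blast
  then obtain f where "f \<in> ramp_span X" "\<forall>x\<in>X. f x = F (inner w x)"
    using ramp_span_ridge_of_knot_span[OF assms(1,2)] \<open>ya \<in> X\<close> \<open>yb \<in> X\<close> by blast
  then show "\<exists>s\<in>ramp_span X. \<forall>x\<in>X. \<bar>h (inner w x) - s x\<bar> < e"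
    using F range by (intro bexI[of _ f]) auto
qed

inductive_set exp_sums :: "('a::real_inner \<Rightarrow> real) set" where
  exp: "(\<lambda>x. c * exp (inner w x)) \<in> exp_sums"
| add: "f \<in> exp_sums \<Longrightarrow> g \<in> exp_sums \<Longrightarrow> (\<lambda>x. f x + g x) \<in> exp_sums"

lemma exp_sums_mult_exp:
  "g \<in> exp_sums \<Longrightarrow> (\<lambda>x. c * exp (inner w x) * g x) \<in> exp_sums"
proof (induction rule: exp_sums.induct)
  case (exp c' w')
  have "(\<lambda>x. c * exp (inner w x) * (c' * exp (inner w' x))) = (\<lambda>x. (c * c') * exp (inner (w + w') x))"
    by (simp add: inner_add_left exp_add algebra_simps)
  then show ?case using exp_sums.exp by metis
next
  case (add f g)
  then show ?case using exp_sums.add[OF add.IH] by (simp add: distrib_left)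
qed

lemma exp_sums_mult:
  "f \<in> exp_sums \<Longrightarrow> g \<in> exp_sums \<Longrightarrow> (\<lambda>x. f x * g x) \<in> exp_sums"
proof (induction rule: exp_sums.induct)
  case (exp c w)
  then show ?case by (rule exp_sums_mult_exp)
next
  case (add f1 f2)
  then show ?case using exp_sums.add[OF add.IH] by (simp add: distrib_right)
qed

lemma function_ring_on_exp_sums:
  assumes "compact X"
  shows "function_ring_on exp_sums X"
proof
  show "continuous_on X f" if "f \<in> exp_sums" for f
    using that by induction (intro continuous_intros)+
  show "(\<lambda>_. c) \<in> exp_sums" for c
    using exp_sums.exp[of c 0] by simp
  show "\<exists>f\<in>exp_sums. f x \<noteq> f y" if "x \<noteq> y" for x y :: 'a
  proof -
    have "inner (x - y) x - inner (x - y) y = (norm (x - y))\<^sup>2"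
      by (simp add: power2_norm_eq_inner inner_diff_left inner_diff_right inner_commute)
    then have "exp (inner (x - y) x) \<noteq> exp (inner (x - y) y)"
      using that by auto
    then show ?thesis using exp_sums.exp[of 1 "x - y"] by force
  qed
qed (use assms in \<open>auto intro: exp_sums.add exp_sums_mult\<close>)

lemma exp_sums_subset_uniform_closure_ramp_span:
  fixes X :: "'a::real_inner set"
  assumes "union_of_cballs X" "compact X" "X \<noteq> {}"
  shows "exp_sums \<subseteq> uniform_closure_on X (ramp_span X)"
proof
  fix f :: "'a \<Rightarrow> real" assume "f \<in> exp_sums"
  then show "f \<in> uniform_closure_on X (ramp_span X)"
  proof induction
    case (exp c w)
    have "continuous_on UNIV (\<lambda>t. c * exp t)" by (intro continuous_intros)
    then show ?case by (rule ridge_in_uniform_closure_ramp_span[OF assms])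
  next
    case (add f g)
    then show ?case by (intro uniform_closure_on_add ramp_span.add)
  qed
qed

lemma continuous_in_uniform_closure_ramp_span:
  fixes X :: "'a::real_inner set"
  assumes "union_of_cballs X" "compact X" "X \<noteq> {}" "continuous_on X g"
  shows "g \<in> uniform_closure_on X (ramp_span X)"
proof (rule uniform_closure_on_trans[OF exp_sums_subset_uniform_closure_ramp_span[OF assms(1-3)]])
  interpret function_ring_on exp_sums X
    by (rule function_ring_on_exp_sums[OF assms(2)])
  show "g \<in> uniform_closure_on X exp_sums"
    unfolding uniform_closure_on_def using Stone_Weierstrass_basic[OF assms(4)] by blast
qed

lemma sampled_network_approximation:
  fixes g :: "real^'d \<Rightarrow> real^'m"
  assumes "\<And>j. (\<lambda>x. g x $ j) \<in> uniform_closure_on X (ramp_span X)" "0 < e"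
  shows "\<exists>\<Phi>. is_sampled_network X \<Phi> \<and> (\<forall>x\<in>X. norm (g x - \<Phi> x) < e)"
proof -
  define e' where "e' = e / CARD('m)"
  have "0 < e'" using assms(2) by (simp add: e'_def)
  then have "\<forall>j. \<exists>s\<in>ramp_span X. \<forall>x\<in>X. \<bar>g x $ j - s x\<bar> < e'"
    using uniform_closure_onD[OF assms(1)] by blast
  then obtain S where S: "\<And>j. S j \<in> ramp_span X" "\<And>j x. x \<in> X \<Longrightarrow> \<bar>g x $ j - S j x\<bar> < e'"
    by metis
  define \<Phi> where "\<Phi> x = (\<chi> j. S j x)" for x
  have "\<Phi> x = (\<Sum>j\<in>UNIV. S j x *\<^sub>R axis j 1)" for x
    using basis_expansion[of "\<Phi> x"] by (simp add: \<Phi>_def scalar_mult_eq_scaleR)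
  then have "\<Phi> = (\<lambda>x. \<Sum>j\<in>UNIV. S j x *\<^sub>R axis j 1)" by (intro ext)
  then have "is_sampled_network X \<Phi>"
    by (simp add: is_sampled_network_sum is_sampled_network_ramp_span S(1))
  moreover have "norm (g x - \<Phi> x) < e" if "x \<in> X" for x
  proof -
    have "norm (g x - \<Phi> x) \<le> (\<Sum>j\<in>UNIV. \<bar>g x $ j - S j x\<bar>)"
      using norm_le_l1_cart[of "g x - \<Phi> x"] by (simp add: \<Phi>_def)
    also have "\<dots> < (\<Sum>j\<in>(UNIV :: 'm set). e')"
      using S(2)[OF that] by (intro sum_strict_mono) auto
    also have "\<dots> = e" by (simp add: e'_def)
    finally show ?thesis .
  qed
  ultimately show ?thesis by blast
qed

theorem theorem4:
  fixes X' :: "(real^'d) set" and \<epsilon>I :: real and g :: "real^'d \<Rightarrow> real^'m" and \<epsilon> :: real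
  assumes "compact X'" and "X' \<noteq> {}"
    and "reach X' > 0"
    and "0 < \<epsilon>I" and "ereal \<epsilon>I < reach X'" and "\<epsilon>I < 1"
    and "continuous_on {x. infdist x X' \<le> \<epsilon>I} g"
    and "\<epsilon> > 0"
  shows "\<exists>\<Phi>. is_sampled_network {x. infdist x X' \<le> \<epsilon>I} \<Phi> \<and>
           (SUP x\<in>{x. infdist x X' \<le> \<epsilon>I}. norm (g x - \<Phi> x)) < \<epsilon>"
proof -
  define X where "X = {x. infdist x X' \<le> \<epsilon>I}"
  have "X' \<subseteq> X"
    using assms(4) by (auto simp: X_def)
  have "compact X"
    unfolding X_def by (rule compact_infdist_le[OF assms(2,1,4)])
  moreover have "X \<noteq> {}"
    using assms(2) \<open>X' \<subseteq> X\<close> by blast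
  moreover have "union_of_cballs X"
    unfolding X_def using compact_imp_closed[OF assms(1)] assms(2,4) by (rule union_of_cballs_infdist_le)
  ultimately have "(\<lambda>x. g x $ j) \<in> uniform_closure_on X (ramp_span X)" for j
    using assms(7) unfolding X_def[symmetric]
    by (intro continuous_in_uniform_closure_ramp_span continuous_intros)
  then obtain \<Phi> where "is_sampled_network X \<Phi>" and close: "\<forall>x\<in>X. norm (g x - \<Phi> x) < \<epsilon> / 2"
    using sampled_network_approximation[of g X "\<epsilon> / 2"] assms(8) by auto
  moreover have "(SUP x\<in>X. norm (g x - \<Phi> x)) \<le> \<epsilon> / 2"
    using \<open>X \<noteq> {}\<close> close by (intro cSUP_least) auto
  ultimately show ?thesis
    using assms(8) unfolding X_def by (intro exI[of _ \<Phi>]) auto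
qed

end
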